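(* Let $r>1$ and integers $N\ge1$, $K\ge2$. For $p=(p^1,\dots,p^K)$ let $z^i=(\sum_{j=1}^ip^j)^N-(\sum_{j=1}^{i-1}p^j)^N$ and $f(p)=\frac{p^K}{z^K}\sum_{i=1}^{K-1}\frac{z^i}{\sum_{j=i}^Kp^j}$. Then the supremum of $f(p)$ over all $p$ with $rp^K\ge1$, $\sum_ip^i=1$, $p^i>0$ for all $i$ equals the supremum of $f(p)$ over all $p$ with $rp^K=1$, $\sum_ip^i=1$, $p^i>0$ for all $i$. *)

theory Defs
  imports "HOL-Analysis.Analysis"
begin

text \<open>Vectors p = (p^1,...,p^K) are functions nat => real, only indices 1..K matter.\<close>

definition zz :: "nat \<Rightarrow> (nat \<Rightarrow> real) \<Rightarrow> nat \<Rightarrow> real" where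
  "zz N p i = (\<Sum>j=1..i. p j) ^ N - (\<Sum>j=1..i-1. p j) ^ N"

definition ff :: "nat \<Rightarrow> nat \<Rightarrow> (nat \<Rightarrow> real) \<Rightarrow> real" where
  "ff N K p = p K / zz N p K * (\<Sum>i=1..K-1. zz N p i / (\<Sum>j=i..K. p j))"

definition feasible_ge :: "real \<Rightarrow> nat \<Rightarrow> (nat \<Rightarrow> real) set" where
  "feasible_ge r K = {p. (\<forall>j. j \<notin> {1..K} \<longrightarrow> p j = 0) \<and> r * p K \<ge> 1 \<and>
      (\<Sum>i=1..K. p i) = 1 \<and> (\<forall>i\<in>{1..K}. p i > 0)}"

definition feasible_eq :: "real \<Rightarrow> nat \<Rightarrow> (nat \<Rightarrow> real) set" where
  "feasible_eq r K = {p. (\<forall>j. j \<notin> {1..K} \<longrightarrow> p j = 0) \<and> r * p K = 1 \<and>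
      (\<Sum>i=1..K. p i) = 1 \<and> (\<forall>i\<in>{1..K}. p i > 0)}"

end

theory Submission
  imports Defs
begin

text \<open>
  Write \<open>S\<^sub>i = p\<^sup>1 + \<dots> + p\<^sup>i\<close> and \<open>b = S\<^sub>K\<^sub>-\<^sub>1 = 1 - p\<^sup>K\<close>.  Given a feasible \<open>p\<close> with
  \<open>r p\<^sup>K \<ge> 1\<close>, scale \<open>p\<^sup>1, \<dots>, p\<^sup>K\<^sup>-\<^sup>1\<close> by \<open>c = b'/b \<ge> 1\<close>, where \<open>b' = 1 - 1/r\<close>, and set the last
  entry to \<open>1/r\<close>.  Then \<open>z\<^sup>i\<close> scales by \<open>c\<^sup>N\<close> for \<open>i < K\<close>, each tail sum \<open>1 - S\<^sub>i\<^sub>-\<^sub>1\<close> shrinks to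
  \<open>1 - c S\<^sub>i\<^sub>-\<^sub>1\<close>, and the prefactor \<open>p\<^sup>K/z\<^sup>K = (1-b)/(1-b\<^sup>N)\<close> becomes \<open>(1-b')/(1-b'\<^sup>N)\<close>.
  Since \<open>x \<mapsto> x\<^sup>N (1-x)/(1-x\<^sup>N)\<close> is increasing on \<open>(0,1)\<close>, the prefactor times \<open>c\<^sup>N\<close> does
  not decrease either, so \<open>f\<close> does not decrease.
\<close>

lemma power_mult_one_minus_div_mono:
  fixes x y :: real
  assumes "0 < x" "x \<le> y" "y < 1" "N \<ge> 1"
  shows "x ^ N * (1 - x) / (1 - x ^ N) \<le> y ^ N * (1 - y) / (1 - y ^ N)"
proof -
  define G where "G t = (\<Sum>i<N. t ^ i)" for t :: real
  have geometric: "1 - t ^ N = (1 - t) * G t" for t :: real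
    unfolding G_def by (rule one_diff_power_eq)
  have G_pos: "G t > 0" if "t \<ge> 0" for t
  proof -
    have "G t = 1 + (\<Sum>i\<in>{1..<N}. t ^ i)"
      unfolding G_def using assms(4) by (simp add: lessThan_atLeast0 sum.atLeast_Suc_lessThan)
    then show ?thesis using that by (simp add: add_pos_nonneg sum_nonneg)
  qed
  have "x ^ N * G y \<le> y ^ N * G x"
    unfolding G_def sum_distrib_left
  proof (rule sum_mono)
    fix k assume "k \<in> {..<N}"
    then have x_split: "x ^ N = x ^ k * x ^ (N - k)" and y_split: "y ^ N = y ^ k * y ^ (N - k)"
      by (simp_all flip: power_add)
    have "x ^ k * y ^ k * x ^ (N - k) \<le> x ^ k * y ^ k * y ^ (N - k)"
      using assms by (intro mult_left_mono power_mono) auto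
    then show "x ^ N * y ^ k \<le> y ^ N * x ^ k"
      unfolding x_split y_split by (simp add: algebra_simps)
  qed
  then have "x ^ N / G x \<le> y ^ N / G y"
    using G_pos[of x] G_pos[of y] assms by (simp add: divide_simps)
  then show ?thesis
    using assms by (simp add: geometric)
qed

definition psum :: "(nat \<Rightarrow> real) \<Rightarrow> nat \<Rightarrow> real" where
  "psum p i = (\<Sum>j=1..i. p j)"

lemma psum_split:
  assumes "1 \<le> i" "i \<le> K"
  shows "psum p K = psum p (i - 1) + (\<Sum>j=i..K. p j)"
proof -
  have "{1..K} = {1..i-1} \<union> {i..K}" "{1..i-1} \<inter> {i..K} = {}"
    using assms by auto
  then show ?thesis
    unfolding psum_def by (simp add: sum.union_disjoint)
qed

lemma psum_mono:
  assumes "\<And>j. p j \<ge> 0" "i \<le> k"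
  shows "psum p i \<le> psum p k"
  unfolding psum_def using assms by (intro sum_mono2) auto

lemma psum_nonneg:
  assumes "\<And>j. p j \<ge> 0"
  shows "psum p i \<ge> 0"
  unfolding psum_def using assms by (simp add: sum_nonneg)

lemma zz_eq_psum: "zz N p i = psum p i ^ N - psum p (i - 1) ^ N"
  unfolding zz_def psum_def ..

lemma zz_nonneg:
  assumes "\<And>j. p j \<ge> 0" "i \<ge> 1"
  shows "zz N p i \<ge> 0"
  using assms psum_mono[of p "i - 1" i] psum_nonneg[of p "i - 1"]
  by (simp add: zz_eq_psum power_mono)

lemma ff_eq_psum:
  assumes "psum p K = 1" "K \<ge> 1"
  shows "ff N K p =
    p K / (1 - psum p (K - 1) ^ N) * (\<Sum>i=1..K-1. zz N p i / (1 - psum p (i - 1)))"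
proof -
  have "zz N p K = 1 - psum p (K - 1) ^ N"
    using assms by (simp add: zz_eq_psum)
  moreover have "(\<Sum>j=i..K. p j) = 1 - psum p (i - 1)" if "i \<in> {1..K-1}" for i
  proof -
    have "i \<le> K" using that by auto
    then show ?thesis using psum_split[of i K p] assms that by simp
  qed
  ultimately show ?thesis
    unfolding ff_def by simp
qed

definition rescale_head :: "nat \<Rightarrow> real \<Rightarrow> real \<Rightarrow> (nat \<Rightarrow> real) \<Rightarrow> nat \<Rightarrow> real" where
  "rescale_head K c t p j = (if j = K then t else if j \<in> {1..K-1} then c * p j else 0)"

lemma psum_rescale_head:
  assumes "i < K"
  shows "psum (rescale_head K c t p) i = c * psum p i"
  unfolding psum_def sum_distrib_left using assms
  by (intro sum.cong) (auto simp: rescale_head_def)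

lemma psum_rescale_head_last:
  assumes "K \<ge> 1"
  shows "psum (rescale_head K c t p) K = c * psum p (K - 1) + t"
  using psum_split[of K K "rescale_head K c t p"] assms
  by (simp add: psum_rescale_head rescale_head_def)

lemma zz_rescale_head:
  assumes "i < K"
  shows "zz N (rescale_head K c t p) i = c ^ N * zz N p i"
  using assms by (simp add: zz_eq_psum psum_rescale_head power_mult_distrib right_diff_distrib)

lemma ff_le_ff_rescale_head:
  assumes nonneg: "\<And>j. p j \<ge> 0" and total: "psum p K = 1" and "K \<ge> 1" "N \<ge> 1"
    and b: "psum p (K - 1) = b" "0 < b" "b \<le> b'" "b' < 1"
  shows "ff N K p \<le> ff N K (rescale_head K (b' / b) (1 - b') p)"
proof -
  define c where "c = b' / b"
  define q where "q = rescale_head K c (1 - b') p"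
  have c_ge_1: "c \<ge> 1" and cb: "c * b = b'"
    unfolding c_def using b by auto
  have "p K = 1 - b"
    using psum_split[of K K p] total b \<open>K \<ge> 1\<close> by simp
  have q_total: "psum q K = 1"
    using \<open>K \<ge> 1\<close> b cb by (simp add: q_def psum_rescale_head_last)
  define A where "A = (1 - b) / (1 - b ^ N)"
  define B where "B = (1 - b') / (1 - b' ^ N)"
  have "b ^ N < 1" "b' ^ N < 1"
    using b \<open>N \<ge> 1\<close> by (simp_all add: power_less_one_iff)
  then have "A \<ge> 0"
    unfolding A_def using b by simp
  have "b ^ N * A \<le> b' ^ N * B"
    using power_mult_one_minus_div_mono[of b b' N] b \<open>N \<ge> 1\<close> unfolding A_def B_def by simp
  then have A_le: "A \<le> B * c ^ N"
    using b unfolding c_def by (simp add: power_divide field_simps)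
  have term_le: "zz N p i / (1 - psum p (i - 1)) \<le> zz N p i / (1 - c * psum p (i - 1))"
    and denom_pos: "0 < 1 - c * psum p (i - 1)" if i: "i \<in> {1..K-1}" for i
  proof -
    have "c * psum p (i - 1) \<le> c * b"
      using psum_mono[OF nonneg, of "i - 1" "K - 1"] b i c_ge_1 by (intro mult_left_mono) auto
    then show "0 < 1 - c * psum p (i - 1)"
      using cb b by simp
    moreover have "psum p (i - 1) \<le> c * psum p (i - 1)"
      using mult_right_mono[OF c_ge_1 psum_nonneg[OF nonneg]] by simp
    ultimately show "zz N p i / (1 - psum p (i - 1)) \<le> zz N p i / (1 - c * psum p (i - 1))"
      using zz_nonneg[where p = p, OF nonneg] i by (intro divide_left_mono) auto
  qed
  have ff_q: "ff N K q = B * c ^ N * (\<Sum>i=1..K-1. zz N p i / (1 - c * psum p (i - 1)))"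
  proof -
    have "(\<Sum>i=1..K-1. zz N q i / (1 - psum q (i - 1)))
        = c ^ N * (\<Sum>i=1..K-1. zz N p i / (1 - c * psum p (i - 1)))"
      unfolding sum_distrib_left
      by (intro sum.cong) (auto simp: q_def psum_rescale_head zz_rescale_head)
    moreover have "q K = 1 - b'" "psum q (K - 1) = b'"
      using \<open>K \<ge> 1\<close> cb b by (simp_all add: q_def rescale_head_def psum_rescale_head)
    ultimately show ?thesis
      using ff_eq_psum[OF q_total \<open>K \<ge> 1\<close>] by (simp add: B_def mult.assoc)
  qed
  have "ff N K p = A * (\<Sum>i=1..K-1. zz N p i / (1 - psum p (i - 1)))"
    using ff_eq_psum[OF total \<open>K \<ge> 1\<close>] b \<open>p K = 1 - b\<close> by (simp add: A_def)
  also have "\<dots> \<le> A * (\<Sum>i=1..K-1. zz N p i / (1 - c * psum p (i - 1)))"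
    using \<open>A \<ge> 0\<close> term_le by (intro mult_left_mono sum_mono) auto
  also have "\<dots> \<le> B * c ^ N * (\<Sum>i=1..K-1. zz N p i / (1 - c * psum p (i - 1)))"
    using A_le denom_pos zz_nonneg[where p = p, OF nonneg]
    by (intro mult_right_mono sum_nonneg divide_nonneg_pos) auto
  also have "\<dots> = ff N K q"
    by (rule ff_q[symmetric])
  finally show ?thesis
    unfolding q_def c_def .
qed

lemma feasible_ge_dominated_by_feasible_eq:
  assumes "r > 1" "N \<ge> 1" "K \<ge> 2" "p \<in> feasible_ge r K"
  shows "\<exists>q\<in>feasible_eq r K. ff N K p \<le> ff N K q"
proof -
  have zero: "\<And>j. j \<notin> {1..K} \<Longrightarrow> p j = 0" and "r * p K \<ge> 1"
    and total: "psum p K = 1" and pos: "\<And>i. i \<in> {1..K} \<Longrightarrow> p i > 0"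
    using assms(4) unfolding feasible_ge_def psum_def by auto
  have nonneg: "p j \<ge> 0" for j
    using zero pos by (cases "j \<in> {1..K}") (auto intro: less_imp_le)
  define b where "b = psum p (K - 1)"
  define b' where "b' = 1 - 1 / r"
  define q where "q = rescale_head K (b' / b) (1 - b') p"
  have "p K = 1 - b"
    using psum_split[of K K p] total assms(3) by (simp add: b_def)
  have "0 < p 1" "p 1 \<le> b"
    using pos assms(3) nonneg unfolding b_def psum_def by (auto intro: member_le_sum)
  moreover have "b \<le> b'" "b' < 1"
    using \<open>r * p K \<ge> 1\<close> \<open>p K = 1 - b\<close> assms(1) by (simp_all add: b'_def field_simps)
  ultimately have "ff N K p \<le> ff N K q"
    using ff_le_ff_rescale_head[OF nonneg total] assms(2,3) unfolding b_def q_def by simp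
  moreover have "q \<in> feasible_eq r K"
  proof -
    have "0 < b" "0 < b'" "1 - b' = 1 / r"
      using \<open>0 < p 1\<close> \<open>p 1 \<le> b\<close> \<open>b \<le> b'\<close> by (simp_all add: b'_def)
    moreover have "psum q K = 1"
      using psum_rescale_head_last[of K "b' / b" "1 - b'" p] \<open>0 < p 1\<close> \<open>p 1 \<le> b\<close> assms(3)
      by (simp add: q_def b_def)
    ultimately show ?thesis
      using assms(1,3) pos
      by (auto simp: feasible_eq_def q_def rescale_head_def psum_def)
  qed
  ultimately show ?thesis by blast
qed

theorem lemma4:
  fixes r :: real and N K :: nat
  assumes "r > 1" and "N \<ge> 1" and "K \<ge> 2"
  shows "(SUP p\<in>feasible_ge r K. ereal (ff N K p)) = (SUP p\<in>feasible_eq r K. ereal (ff N K p))"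
proof (rule SUP_eq)
  fix p assume "p \<in> feasible_ge r K"
  then show "\<exists>q\<in>feasible_eq r K. ereal (ff N K p) \<le> ereal (ff N K q)"
    using feasible_ge_dominated_by_feasible_eq assms by simp
next
  fix q assume "q \<in> feasible_eq r K"
  then have "q \<in> feasible_ge r K"
    by (simp add: feasible_eq_def feasible_ge_def)
  then show "\<exists>p\<in>feasible_ge r K. ereal (ff N K q) \<le> ereal (ff N K p)"
    by blast
qed

end
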